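(* For $j,k\in\mathbb{N}$ define $D_{j,k}:[0,\infty)\to\{0,1,\dots,2^k-1\}$ by $D_{j,k}(x):=\lfloor2^{j+k}x\rfloor\bmod 2^k$. Let $(\zeta_n)_{n\in\mathbb{N}}$ be i.i.d. random variables taking values in $\mathbb{N}=\{0,1,2,\dots\}$ such that $\mathbf{P}(\zeta_0=i)>0$ for all $i\in\mathbb{N}$, and assume that $\widehat S:=\sum_{n=0}^\infty\zeta_n2^{-n}$ converges almost surely. Then for every positive integer $k$ and every $\ell\in\{0,1,\dots,2^k-1\}$, almost surely $$\lim_{n\to\infty}\frac1n\sum_{j=0}^{n-1}\mathbf{1}_{\{D_{j,k}(\widehat S)=\ell\}}=\mathbf{P}\big(D_{0,k}(\widehat S)=\ell\big).$$ *)

theory Defs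
  imports "HOL-Probability.Probability"
begin

definition D :: "nat \<Rightarrow> nat \<Rightarrow> real \<Rightarrow> nat" where
  "D j k x = nat \<lfloor>2 ^ (j + k) * x\<rfloor> mod 2 ^ k"

definition Shat :: "(nat \<Rightarrow> 'a \<Rightarrow> nat) \<Rightarrow> 'a \<Rightarrow> real" where
  "Shat \<zeta> \<omega> = (\<Sum>n. real (\<zeta> n \<omega>) / 2 ^ n)"

end

(* Write w for the sequence (zeta_n)_n. Since 2^j * Shat(w) differs from Shat of the shifted
   sequence (zeta_(j+n))_n by an integer, D_{j,k}(Shat) is D_{0,k} o Shat evaluated at the j-th
   shift of w, and the claim is Birkhoff's ergodic theorem for the Bernoulli shift, applied to the
   indicator of {D_{0,k} o Shat = l}. For a bounded observable Phi the limsup of the Cesaro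
   averages of Phi along the shift orbit is a shift-invariant function, hence almost surely
   constant by Kolmogorov's 0-1 law. Integrating a greedy covering of [0, L) by blocks of
   average at least t gives the maximal ergodic inequality, which forces that constant to be at
   most E Phi; the same bound for B - Phi gives the matching lower bound. *)

theory Submission
  imports Defs
begin

lemma sum_lessThan_add:
  fixes f :: "nat \<Rightarrow> 'a::comm_monoid_add"
  shows "(\<Sum>j<m + n. f j) = (\<Sum>j<m. f j) + (\<Sum>j<n. f (m + j))"
  by (induction n) (simp_all add: ac_simps)

definition cesaro_mean :: "(nat \<Rightarrow> real) \<Rightarrow> nat \<Rightarrow> real" where
  "cesaro_mean x n = (\<Sum>j<n. x j) / real n"

lemma cesaro_mean_const_add:
  "n > 0 \<Longrightarrow> cesaro_mean (\<lambda>j. c + x j) n = c + cesaro_mean x n"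
  by (simp add: cesaro_mean_def sum.distrib field_simps)

lemma cesaro_mean_const_diff:
  "n > 0 \<Longrightarrow> cesaro_mean (\<lambda>j. c - x j) n = c - cesaro_mean x n"
  by (simp add: cesaro_mean_def sum_subtractf field_simps)

lemma cesaro_mean_shift_diff_tendsto_0:
  assumes bound: "\<And>j. \<bar>x j\<bar> \<le> B"
  shows "(\<lambda>n. cesaro_mean x (n + m) - cesaro_mean (\<lambda>j. x (m + j)) n) \<longlonglongrightarrow> 0"
proof (rule Lim_null_comparison)
  define C where "C = \<bar>\<Sum>j<m. x j\<bar> + real m * B"
  show "\<forall>\<^sub>F n in sequentially.
          norm (cesaro_mean x (n + m) - cesaro_mean (\<lambda>j. x (m + j)) n) \<le> C / real (n + m)"
  proof (intro eventuallyI)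
    fix n
    define T where "T = (\<Sum>j<n. x (m + j))"
    have "\<bar>T\<bar> \<le> (\<Sum>j<n. \<bar>x (m + j)\<bar>)"
      unfolding T_def by (rule sum_abs)
    also have "\<dots> \<le> real n * B"
      using sum_bounded_above[of "{..<n}" "\<lambda>j. \<bar>x (m + j)\<bar>" B] bound by simp
    finally have T: "\<bar>T\<bar> \<le> real n * B" .
    have "(\<Sum>j<n + m. x j) = (\<Sum>j<m. x j) + T"
      unfolding T_def by (simp add: sum_lessThan_add add.commute)
    then have "cesaro_mean x (n + m) - cesaro_mean (\<lambda>j. x (m + j)) n
               = ((\<Sum>j<m. x j) - real m * (T / real n)) / real (n + m)"
      by (cases "n = 0") (auto simp: cesaro_mean_def T_def field_simps)
    moreover have "\<bar>real m * (T / real n)\<bar> \<le> real m * B"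
    proof (cases "n = 0")
      case False
      then have "\<bar>T / real n\<bar> \<le> B"
        using T by (simp add: divide_le_eq mult.commute)
      then show ?thesis by (simp add: abs_mult mult_left_mono del: times_divide_eq_right)
    qed (use bound[of 0] in simp)
    then have "\<bar>(\<Sum>j<m. x j) - real m * (T / real n)\<bar> \<le> C"
      unfolding C_def by (rule order_trans[OF abs_triangle_ineq4 add_left_mono])
    ultimately show "norm (cesaro_mean x (n + m) - cesaro_mean (\<lambda>j. x (m + j)) n) \<le> C / real (n + m)"
      by (simp add: divide_right_mono)
  qed
  show "(\<lambda>n. C / real (n + m)) \<longlonglongrightarrow> 0"
    using LIMSEQ_ignore_initial_segment[OF lim_const_over_n[of C], of m] by simp
qed

lemma limsup_cesaro_mean_shift:
  assumes "\<And>j. \<bar>x j\<bar> \<le> B"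
  shows "limsup (\<lambda>n. ereal (cesaro_mean (\<lambda>j. x (m + j)) n)) = limsup (\<lambda>n. ereal (cesaro_mean x n))"
proof -
  have "(\<lambda>n. ereal (cesaro_mean x (n + m) - cesaro_mean (\<lambda>j. x (m + j)) n)) \<longlonglongrightarrow> 0"
    using cesaro_mean_shift_diff_tendsto_0[OF assms] by (simp add: zero_ereal_def)
  from ereal_limsup_lim_add[OF this, of "\<lambda>n. ereal (cesaro_mean (\<lambda>j. x (m + j)) n)"]
  have "limsup (\<lambda>n. ereal (cesaro_mean x (n + m)))
        = limsup (\<lambda>n. ereal (cesaro_mean (\<lambda>j. x (m + j)) n))"
    by simp
  then show ?thesis
    using limsup_shift_k[of "\<lambda>n. ereal (cesaro_mean x n)" m] by simp
qed

lemma cesaro_mean_tendsto_of_limsup_le: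
  assumes upper: "limsup (\<lambda>n. ereal (cesaro_mean (\<lambda>j. c + x j) n)) \<le> ereal (c + p)"
    and lower: "limsup (\<lambda>n. ereal (cesaro_mean (\<lambda>j. c - x j) n)) \<le> ereal (c - p)"
  shows "cesaro_mean x \<longlonglongrightarrow> p"
proof (rule order_tendstoI)
  fix t assume "p < t"
  with upper have "limsup (\<lambda>n. ereal (cesaro_mean (\<lambda>j. c + x j) n)) < ereal (c + t)"
    by (simp add: le_less_trans)
  then have "\<forall>\<^sub>F n in sequentially. cesaro_mean (\<lambda>j. c + x j) n < c + t"
    by (auto dest: Limsup_lessD)
  then show "\<forall>\<^sub>F n in sequentially. cesaro_mean x n < t"
    using eventually_gt_at_top[of 0] by eventually_elim (simp add: cesaro_mean_const_add)
next
  fix t assume "t < p"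
  with lower have "limsup (\<lambda>n. ereal (cesaro_mean (\<lambda>j. c - x j) n)) < ereal (c - t)"
    by (simp add: le_less_trans)
  then have "\<forall>\<^sub>F n in sequentially. cesaro_mean (\<lambda>j. c - x j) n < c - t"
    by (auto dest: Limsup_lessD)
  then show "\<forall>\<^sub>F n in sequentially. t < cesaro_mean x n"
    using eventually_gt_at_top[of 0] by eventually_elim (simp add: cesaro_mean_const_diff)
qed

lemma less_limsup_cesaro_mean_imp_block:
  assumes "ereal t < limsup (\<lambda>n. ereal (cesaro_mean x n))"
  shows "\<exists>n\<ge>1. t * real n \<le> (\<Sum>i<n. x i)"
proof (rule ccontr)
  assume no_block: "\<not> ?thesis"
  have "\<forall>\<^sub>F n in sequentially. ereal (cesaro_mean x n) \<le> ereal t"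
    using eventually_ge_at_top[of 1]
  proof eventually_elim
    case (elim n)
    with no_block have "\<not> t * real n \<le> (\<Sum>i<n. x i)"
      by auto
    with elim show ?case
      by (simp add: cesaro_mean_def divide_le_eq mult.commute)
  qed
  then have "limsup (\<lambda>n. ereal (cesaro_mean x n)) \<le> ereal t"
    by (rule Limsup_bounded)
  with assms show False
    by simp
qed

definition heavy_start :: "real \<Rightarrow> nat \<Rightarrow> (nat \<Rightarrow> real) \<Rightarrow> nat \<Rightarrow> bool" where
  "heavy_start a N x j \<longleftrightarrow> (\<exists>n\<in>{1..N}. a * real n \<le> (\<Sum>i<n. x (j + i)))"

lemma heavy_start_shift: "heavy_start a N x (m + j) = heavy_start a N (\<lambda>i. x (m + i)) j"
  by (simp add: heavy_start_def add.assoc)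

lemma sum_of_bool_le: "(\<Sum>j<n. of_bool (P j) :: real) \<le> real n"
  using sum_mono[of "{..<n}" "\<lambda>j. of_bool (P j) :: real" "\<lambda>_. 1"] by simp

(* Greedy covering: from a heavy start jump over its block, otherwise advance by one. *)
lemma heavy_starts_le_sum:
  assumes nonneg: "\<And>j. 0 \<le> x j" and "0 \<le> a"
  shows "a * (\<Sum>j<L. of_bool (heavy_start a N x j)) \<le> (\<Sum>j<L + N. x j)"
  using nonneg
proof (induction L arbitrary: x rule: less_induct)
  case (less L)
  show ?case
  proof (cases "heavy_start a N x 0")
    case True
    then obtain n where n: "1 \<le> n" "n \<le> N" "a * real n \<le> (\<Sum>i<n. x i)"
      by (auto simp: heavy_start_def)
    show ?thesis
    proof (cases "n \<le> L")
      case True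
      then obtain L' where L: "L = n + L'" by (rule less_eqE)
      have "a * (\<Sum>j<L. of_bool (heavy_start a N x j))
            \<le> a * real n + a * (\<Sum>j<L'. of_bool (heavy_start a N (\<lambda>i. x (n + i)) j))"
        using \<open>0 \<le> a\<close> sum_of_bool_le[of "heavy_start a N x" n]
        by (simp add: L sum_lessThan_add heavy_start_shift distrib_left mult_left_mono)
      also have "\<dots> \<le> (\<Sum>i<n. x i) + (\<Sum>j<L' + N. x (n + j))"
        using n less L by (intro add_mono less.IH) auto
      also have "\<dots> = (\<Sum>j<L + N. x j)"
        by (simp add: L sum_lessThan_add add.assoc)
      finally show ?thesis .
    next
      case False
      have "a * (\<Sum>j<L. of_bool (heavy_start a N x j)) \<le> a * real n"
        using \<open>0 \<le> a\<close> False sum_of_bool_le[of "heavy_start a N x" L]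
        by (intro mult_left_mono) auto
      also have "\<dots> \<le> (\<Sum>j<L + N. x j)"
        using n less.prems by (intro order_trans[OF n(3)] sum_mono2) auto
      finally show ?thesis .
    qed
  next
    case False
    show ?thesis
    proof (cases L)
      case 0
      then show ?thesis using less.prems by (simp add: sum_nonneg)
    next
      case (Suc L')
      have "a * (\<Sum>j<L. of_bool (heavy_start a N x j))
            = a * (\<Sum>j<L'. of_bool (heavy_start a N (\<lambda>i. x (Suc i)) j))"
        unfolding Suc sum.lessThan_Suc_shift using False heavy_start_shift[of a N x 1] by simp
      also have "\<dots> \<le> (\<Sum>j<L' + N. x (Suc j))"
        using Suc less by (intro less.IH) auto
      also have "\<dots> \<le> (\<Sum>j<L + N. x j)"
        unfolding Suc add_Suc sum.lessThan_Suc_shift using less.prems[of 0] by simp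
      finally show ?thesis .
    qed
  qed
qed

definition seq_shift :: "nat \<Rightarrow> (nat \<Rightarrow> 'a) \<Rightarrow> nat \<Rightarrow> 'a" where
  "seq_shift j w = (\<lambda>i. w (j + i))"

lemma seq_shift_seq_shift: "seq_shift i (seq_shift j w) = seq_shift (j + i) w"
  by (simp add: seq_shift_def add.assoc)

lemma measurable_seq_shift[measurable]:
  "seq_shift j \<in> measurable (\<Pi>\<^sub>M i\<in>UNIV. N) (\<Pi>\<^sub>M i\<in>UNIV. N)"
  unfolding seq_shift_def by (rule measurable_PiM_single') (auto simp: space_PiM)

locale bernoulli_shift = P: prob_space P for P :: "'b measure"
begin

abbreviation S :: "(nat \<Rightarrow> 'b) measure" where
  "S \<equiv> \<Pi>\<^sub>M i\<in>UNIV. P"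

sublocale prob_space S
  by (rule prob_space_PiM) (rule P.prob_space_axioms)

lemma distr_seq_shift: "distr S S (seq_shift j) = S"
proof -
  have "distr S S (seq_shift j) = distr S S (\<lambda>w. \<lambda>i\<in>UNIV. w (j + i))"
    by (intro distr_cong) (auto simp: seq_shift_def)
  also have "\<dots> = S"
    using distr_PiM_reindex[of UNIV "\<lambda>_. P" "\<lambda>i. j + i" UNIV] P.prob_space_axioms by simp
  finally show ?thesis .
qed

lemma integral_seq_shift:
  fixes f :: "(nat \<Rightarrow> 'b) \<Rightarrow> real"
  assumes "f \<in> borel_measurable S"
  shows "(\<integral>w. f (seq_shift j w) \<partial>S) = (\<integral>w. f w \<partial>S)"
  using integral_distr[of "seq_shift j" S S f] assms by (simp add: distr_seq_shift)

lemma indep_coordinates: "indep_vars (\<lambda>_. P) (\<lambda>i w. w i) UNIV"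
proof (subst indep_vars_iff_distr_eq_PiM)
  have "(\<Pi>\<^sub>M i\<in>UNIV. distr S P (\<lambda>w. w i)) = S"
    by (intro PiM_cong refl distr_PiM_component P.prob_space_axioms) auto
  then show "distr S S (\<lambda>w. \<lambda>i\<in>UNIV. w i) = (\<Pi>\<^sub>M i\<in>UNIV. distr S P (\<lambda>w. w i))"
    by (simp add: restrict_UNIV distr_id)
qed auto

definition coordinate_events :: "nat \<Rightarrow> (nat \<Rightarrow> 'b) set set" where
  "coordinate_events i = sigma_sets (space S) {(\<lambda>w. w i) -` X \<inter> space S | X. X \<in> sets P}"

lemma coordinate_events_subset: "(\<Union>i\<in>I. coordinate_events i) \<subseteq> Pow (space S)"
proof (rule subsetI, rule PowI)
  fix A assume "A \<in> (\<Union>i\<in>I. coordinate_events i)"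
  then obtain i where "A \<in> coordinate_events i"
    by blast
  then show "A \<subseteq> space S"
    unfolding coordinate_events_def by (rule sigma_sets_into_sp[rotated]) auto
qed

lemma measurable_seq_shift_tail:
  "seq_shift m \<in> measurable (sigma (space S) (\<Union>i\<in>{m..}. coordinate_events i)) S"
proof -
  let ?T = "sigma (space S) (\<Union>i\<in>{m..}. coordinate_events i)"
  have space_T: "space ?T = space S"
    using coordinate_events_subset by simp
  have "(\<lambda>w. w (m + i)) \<in> measurable ?T P" for i
  proof (rule measurableI)
    fix X assume "X \<in> sets P"
    then have "(\<lambda>w. w (m + i)) -` X \<inter> space S \<in> coordinate_events (m + i)"
      unfolding coordinate_events_def by (intro sigma_sets.Basic) auto
    then show "(\<lambda>w. w (m + i)) -` X \<inter> space ?T \<in> sets ?T"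
      using coordinate_events_subset by (auto intro!: sigma_sets.Basic bexI[of _ "m + i"])
  qed (unfold space_T, auto simp: space_PiM)
  then show ?thesis
    unfolding seq_shift_def by (intro measurable_PiM_single') (unfold space_T, auto simp: space_PiM)
qed

lemma shift_invariant_event_trivial:
  assumes A: "A \<in> events"
    and invariant: "\<And>m w. w \<in> space S \<Longrightarrow> seq_shift m w \<in> A \<longleftrightarrow> w \<in> A"
  shows "prob A = 0 \<or> prob A = 1"
proof (rule kolmogorov_0_1_law)
  show "sigma_algebra (space S) (coordinate_events i)" for i
    unfolding coordinate_events_def by (rule sigma_algebra_sigma_sets) auto
  show "indep_sets coordinate_events UNIV"
    using indep_coordinates unfolding indep_vars_def coordinate_events_def by simp
  show "A \<in> tail_events coordinate_events"
    unfolding tail_events_def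
  proof (rule INT_I)
    fix m :: nat
    have "seq_shift m -` A \<inter> space S \<in> sigma_sets (space S) (\<Union> (coordinate_events ` {m..}))"
      using measurable_sets[OF measurable_seq_shift_tail A] coordinate_events_subset by simp
    also have "seq_shift m -` A \<inter> space S = A"
      using invariant sets.sets_into_space[OF A] by blast
    finally show "A \<in> sigma_sets (space S) (\<Union> (coordinate_events ` {m..}))" .
  qed
qed

context
  fixes \<Phi> :: "(nat \<Rightarrow> 'b) \<Rightarrow> real" and B :: real
  assumes measurable_\<Phi>[measurable]: "\<Phi> \<in> borel_measurable S"
    and \<Phi>_nonneg: "\<And>w. 0 \<le> \<Phi> w" and \<Phi>_le: "\<And>w. \<Phi> w \<le> B"
begin

lemma integrable_\<Phi>_seq_shift: "integrable S (\<lambda>w. \<Phi> (seq_shift j w))"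
  by (rule integrable_const_bound[where B = B]) (simp_all add: abs_of_nonneg \<Phi>_nonneg \<Phi>_le)

lemma maximal_ergodic_inequality_upto:
  assumes "0 \<le> t"
  shows "t * prob {w \<in> space S. heavy_start t N (\<lambda>i. \<Phi> (seq_shift i w)) 0} \<le> expectation \<Phi>"
proof (rule ccontr)
  define G where "G = {w \<in> space S. heavy_start t N (\<lambda>i. \<Phi> (seq_shift i w)) 0}"
  have [measurable]: "G \<in> events"
    unfolding G_def heavy_start_def by measurable
  have heavy_iff: "heavy_start t N (\<lambda>i. \<Phi> (seq_shift i w)) j \<longleftrightarrow> seq_shift j w \<in> G"
    if "w \<in> space S" for w j
    using measurable_space[OF measurable_seq_shift that]
    by (simp add: G_def heavy_start_def seq_shift_seq_shift)
  have integrable_G: "integrable S (\<lambda>w. indicator G (seq_shift j w) :: real)" for j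
    by (rule integrable_const_bound[where B = 1]) auto
  have count: "t * (real L * prob G) \<le> (real L + real N) * expectation \<Phi>" for L
  proof -
    have "(\<integral>w. t * (\<Sum>j<L. indicator G (seq_shift j w)) \<partial>S)
          \<le> (\<integral>w. (\<Sum>j<L + N. \<Phi> (seq_shift j w)) \<partial>S)"
    proof (rule integral_mono)
      fix w assume w: "w \<in> space S"
      have "t * (\<Sum>j<L. of_bool (heavy_start t N (\<lambda>i. \<Phi> (seq_shift i w)) j))
            \<le> (\<Sum>j<L + N. \<Phi> (seq_shift j w))"
        using \<Phi>_nonneg \<open>0 \<le> t\<close> by (intro heavy_starts_le_sum)
      then show "t * (\<Sum>j<L. indicator G (seq_shift j w)) \<le> (\<Sum>j<L + N. \<Phi> (seq_shift j w))"
        by (simp add: heavy_iff[OF w] indicator_def)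
    qed (use integrable_G integrable_\<Phi>_seq_shift in auto)
    moreover have "(\<integral>w. indicator G (seq_shift j w) \<partial>S) = prob G" for j
      using integral_seq_shift[of "indicator G"] by simp
    moreover have "(\<integral>w. \<Phi> (seq_shift j w) \<partial>S) = expectation \<Phi>" for j
      by (rule integral_seq_shift[OF measurable_\<Phi>])
    ultimately show ?thesis
      using integrable_G integrable_\<Phi>_seq_shift by (simp add: integral_sum)
  qed
  assume "\<not> ?thesis"
  then have "0 < t * prob G - expectation \<Phi>"
    by (simp add: G_def)
  then obtain L where "real N * expectation \<Phi> < real L * (t * prob G - expectation \<Phi>)"
    using ex_less_of_nat_mult by blast
  with count[of L] show False
    by (simp add: algebra_simps)
qed

lemma maximal_ergodic_inequality:
  assumes "0 \<le> t"
  shows "t * prob {w \<in> space S. \<exists>n\<ge>1. t * real n \<le> (\<Sum>i<n. \<Phi> (seq_shift i w))} \<le> expectation \<Phi>"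
proof -
  define G where "G N = {w \<in> space S. heavy_start t N (\<lambda>i. \<Phi> (seq_shift i w)) 0}" for N
  have "G N \<in> events" for N
    unfolding G_def heavy_start_def by measurable
  then have "range G \<subseteq> events"
    by blast
  moreover have "incseq G"
    unfolding G_def heavy_start_def by (intro monoI) force
  ultimately have "(\<lambda>N. t * prob (G N)) \<longlonglongrightarrow> t * prob (\<Union>N. G N)"
    by (intro tendsto_mult_left finite_Lim_measure_incseq)
  moreover have "(\<Union>N. G N) = {w \<in> space S. \<exists>n\<ge>1. t * real n \<le> (\<Sum>i<n. \<Phi> (seq_shift i w))}"
    by (force simp: G_def heavy_start_def)
  ultimately show ?thesis
    using maximal_ergodic_inequality_upto[OF assms] unfolding G_def
    by (intro LIMSEQ_le_const2) auto
qed

lemma prob_limsup_cesaro_mean_gt: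
  assumes "expectation \<Phi> < t"
  shows "prob {w \<in> space S.
                ereal t < limsup (\<lambda>n. ereal (cesaro_mean (\<lambda>j. \<Phi> (seq_shift j w)) n))} = 0"
    (is "prob ?H = 0")
proof -
  have "?H \<in> events"
    unfolding cesaro_mean_def by measurable
  moreover have "seq_shift m w \<in> ?H \<longleftrightarrow> w \<in> ?H" if "w \<in> space S" for m w
    using that measurable_space[OF measurable_seq_shift that, of m]
      limsup_cesaro_mean_shift[of "\<lambda>j. \<Phi> (seq_shift j w)" B m]
    by (simp add: seq_shift_seq_shift abs_of_nonneg \<Phi>_nonneg \<Phi>_le)
  ultimately have "prob ?H = 0 \<or> prob ?H = 1"
    by (rule shift_invariant_event_trivial)
  moreover have "prob ?H < 1"
  proof -
    define E where "E = {w \<in> space S. \<exists>n\<ge>1. t * real n \<le> (\<Sum>i<n. \<Phi> (seq_shift i w))}"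
    have "0 \<le> expectation \<Phi>"
      by (simp add: \<Phi>_nonneg)
    with assms have "t * prob E \<le> expectation \<Phi>"
      using maximal_ergodic_inequality[of t] unfolding E_def by simp
    with assms have "t * prob E < t * 1"
      by linarith
    then have "prob E < 1"
      using \<open>0 \<le> expectation \<Phi>\<close> assms by (simp add: mult_less_cancel_left_pos)
    moreover have "E \<in> events"
      unfolding E_def by measurable
    moreover have "?H \<subseteq> E"
      unfolding E_def using less_limsup_cesaro_mean_imp_block by blast
    ultimately show ?thesis
      using finite_measure_mono[of ?H E] by linarith
  qed
  ultimately show ?thesis
    by linarith
qed

lemma AE_limsup_cesaro_mean_le:
  "AE w in S. limsup (\<lambda>n. ereal (cesaro_mean (\<lambda>j. \<Phi> (seq_shift j w)) n)) \<le> ereal (expectation \<Phi>)"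
proof -
  let ?H = "\<lambda>t. {w \<in> space S.
                      ereal t < limsup (\<lambda>n. ereal (cesaro_mean (\<lambda>j. \<Phi> (seq_shift j w)) n))}"
  have "AE w in S. w \<notin> ?H t" if "expectation \<Phi> < t" for t
  proof (rule AE_not_in, rule null_setsI)
    show "emeasure S (?H t) = 0"
      using prob_limsup_cesaro_mean_gt[OF that] by (simp add: emeasure_eq_measure)
    show "?H t \<in> events"
      unfolding cesaro_mean_def by measurable
  qed
  then have "AE w in S. \<forall>t\<in>{t \<in> \<rat>. expectation \<Phi> < t}. w \<notin> ?H t"
    by (intro AE_ball_countable') (auto intro: countable_subset[OF _ countable_rat])
  then show ?thesis
  proof (rule AE_mp, intro AE_I2 impI)
    fix w assume "w \<in> space S" and not_H: "\<forall>t\<in>{t \<in> \<rat>. expectation \<Phi> < t}. w \<notin> ?H t"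
    show "limsup (\<lambda>n. ereal (cesaro_mean (\<lambda>j. \<Phi> (seq_shift j w)) n)) \<le> ereal (expectation \<Phi>)"
    proof (rule ccontr)
      assume "\<not> ?thesis"
      then have "ereal (expectation \<Phi>) < limsup (\<lambda>n. ereal (cesaro_mean (\<lambda>j. \<Phi> (seq_shift j w)) n))"
        by (simp add: not_le)
      then obtain z where "ereal (expectation \<Phi>) < ereal z"
        and z: "ereal z < limsup (\<lambda>n. ereal (cesaro_mean (\<lambda>j. \<Phi> (seq_shift j w)) n))"
        using ereal_dense2 by blast
      then have "expectation \<Phi> < z"
        by simp
      then obtain q where "q \<in> \<rat>" "expectation \<Phi> < q" "q < z"
        using Rats_dense_in_real by blast
      moreover from \<open>q < z\<close> have "w \<in> ?H q"
        using z \<open>w \<in> space S\<close> by (simp add: order.strict_trans[of "ereal q" "ereal z"])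
      ultimately show False
        using not_H by blast
    qed
  qed
qed

end

theorem AE_cesaro_mean_seq_shift_tendsto:
  assumes [measurable]: "\<Phi> \<in> borel_measurable S" and bounded: "\<And>w. \<bar>\<Phi> w\<bar> \<le> B"
  shows "AE w in S. cesaro_mean (\<lambda>j. \<Phi> (seq_shift j w)) \<longlonglongrightarrow> expectation \<Phi>"
proof -
  have "integrable S \<Phi>"
    using bounded by (intro integrable_const_bound[where B = B]) auto
  then have expectations: "expectation (\<lambda>w. B + \<Phi> w) = B + expectation \<Phi>"
    "expectation (\<lambda>w. B - \<Phi> w) = B - expectation \<Phi>"
    by (simp_all add: prob_space)
  have "0 \<le> B + \<Phi> w" "B + \<Phi> w \<le> 2 * B" "0 \<le> B - \<Phi> w" "B - \<Phi> w \<le> 2 * B" for w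
    using bounded[of w] by auto
  then have "AE w in S. limsup (\<lambda>n. ereal (cesaro_mean (\<lambda>j. B + \<Phi> (seq_shift j w)) n))
               \<le> ereal (expectation (\<lambda>w. B + \<Phi> w))"
    and "AE w in S. limsup (\<lambda>n. ereal (cesaro_mean (\<lambda>j. B - \<Phi> (seq_shift j w)) n))
               \<le> ereal (expectation (\<lambda>w. B - \<Phi> w))"
    by (intro AE_limsup_cesaro_mean_le[where B = "2 * B"]; simp)+
  then show ?thesis
    by eventually_elim (rule cesaro_mean_tendsto_of_limsup_le[where c = B], simp_all add: expectations)
qed

end

lemma (in prob_space) distr_iid_seq_eq_PiM:
  fixes X :: "nat \<Rightarrow> 'a \<Rightarrow> 'b"
  assumes indep: "indep_vars (\<lambda>_. N) X UNIV"
    and ident: "\<And>n. distr M N (X n) = distr M N (X 0)"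
  shows "distr M (\<Pi>\<^sub>M i\<in>UNIV. distr M N (X 0)) (\<lambda>\<omega> i. X i \<omega>)
           = (\<Pi>\<^sub>M i\<in>UNIV. distr M N (X 0))"
proof -
  have X: "random_variable N (X i)" for i
    using indep by (simp add: indep_vars_def)
  have "distr M (\<Pi>\<^sub>M i\<in>UNIV. N) (\<lambda>\<omega>. \<lambda>i\<in>UNIV. X i \<omega>)
          = (\<Pi>\<^sub>M i\<in>UNIV. distr M N (X i))"
    using indep by (subst (asm) indep_vars_iff_distr_eq_PiM) (auto simp: X)
  also have "\<dots> = (\<Pi>\<^sub>M i\<in>UNIV. distr M N (X 0))"
    by (intro PiM_cong refl ident)
  finally show ?thesis
    by (simp add: restrict_UNIV cong: distr_cong sets_PiM_cong)
qed

lemma (in prob_space) AE_cesaro_mean_iid_tendsto: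
  fixes X :: "nat \<Rightarrow> 'a \<Rightarrow> 'b" and \<Phi> :: "(nat \<Rightarrow> 'b) \<Rightarrow> real"
  assumes indep: "indep_vars (\<lambda>_. N) X UNIV"
    and ident: "\<And>n. distr M N (X n) = distr M N (X 0)"
    and \<Phi>: "\<Phi> \<in> borel_measurable (\<Pi>\<^sub>M i\<in>UNIV. N)"
    and bounded: "\<And>w. \<bar>\<Phi> w\<bar> \<le> B"
  shows "AE \<omega> in M. cesaro_mean (\<lambda>j. \<Phi> (seq_shift j (\<lambda>i. X i \<omega>)))
                      \<longlonglongrightarrow> (\<integral>\<omega>. \<Phi> (\<lambda>i. X i \<omega>) \<partial>M)"
proof -
  define P where "P = distr M N (X 0)"
  have X: "random_variable N (X i)" for i
    using indep by (simp add: indep_vars_def)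
  interpret shift: bernoulli_shift P
    unfolding P_def by (intro bernoulli_shift.intro prob_space_distr X)
  have Z: "(\<lambda>\<omega> i. X i \<omega>) \<in> measurable M shift.S"
    by (rule measurable_PiM_single') (auto simp: P_def X measurable_space[OF X])
  have law: "distr M shift.S (\<lambda>\<omega> i. X i \<omega>) = shift.S"
    unfolding P_def by (rule distr_iid_seq_eq_PiM[OF indep ident])
  have sets_S: "sets shift.S = sets (\<Pi>\<^sub>M i\<in>UNIV. N)"
    by (intro sets_PiM_cong) (simp_all add: P_def)
  from \<Phi> have "\<Phi> \<in> borel_measurable shift.S"
    by (simp only: measurable_cong_sets[OF sets_S refl])
  then have "AE w in shift.S. cesaro_mean (\<lambda>j. \<Phi> (seq_shift j w)) \<longlonglongrightarrow> shift.expectation \<Phi>"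
    by (rule shift.AE_cesaro_mean_seq_shift_tendsto[OF _ bounded])
  moreover have "shift.expectation \<Phi> = (\<integral>\<omega>. \<Phi> (\<lambda>i. X i \<omega>) \<partial>M)"
    using integral_distr[OF Z \<open>\<Phi> \<in> borel_measurable shift.S\<close>] by (simp add: law)
  ultimately show ?thesis
    by (intro AE_distrD[OF Z]) (simp only: law)
qed

lemma measurable_D[measurable]: "D j k \<in> measurable borel (count_space UNIV)"
  unfolding D_def by measurable

lemma D_eq_D_0_scaled: "D j k x = D 0 k (2 ^ j * x)"
  by (simp add: D_def power_add ac_simps)

lemma D_0_add_of_nat:
  assumes "0 \<le> x"
  shows "D 0 k (x + real m) = D 0 k x"
proof -
  have "2 ^ k * (x + real m) = 2 ^ k * x + of_int (int (2 ^ k * m))"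
    by (simp add: distrib_left)
  then have "\<lfloor>2 ^ k * (x + real m)\<rfloor> = \<lfloor>2 ^ k * x\<rfloor> + int (2 ^ k * m)"
    by (simp only: floor_add_int)
  moreover have "0 \<le> \<lfloor>2 ^ k * x\<rfloor>"
    using assms by simp
  ultimately have "nat \<lfloor>2 ^ k * (x + real m)\<rfloor> = nat \<lfloor>2 ^ k * x\<rfloor> + 2 ^ k * m"
    by (simp add: nat_add_distrib nat_mult_distrib nat_power_eq)
  then show ?thesis
    by (simp add: D_def)
qed

abbreviation Shat_seq :: "(nat \<Rightarrow> nat) \<Rightarrow> real" where
  "Shat_seq \<equiv> Shat (\<lambda>n w. w n)"

lemma Shat_eq_Shat_seq: "Shat \<zeta> \<omega> = Shat_seq (\<lambda>i. \<zeta> i \<omega>)"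
  by (simp add: Shat_def)

lemma borel_measurable_Shat_seq[measurable]:
  "Shat_seq \<in> borel_measurable (\<Pi>\<^sub>M i\<in>UNIV. count_space UNIV)"
  unfolding Shat_def by measurable

lemma Shat_seq_nonneg: "summable (\<lambda>n. real (w n) / 2 ^ n) \<Longrightarrow> 0 \<le> Shat_seq w"
  unfolding Shat_def by (rule suminf_nonneg) auto

lemma binary_tail:
  "(\<lambda>n. real (w (n + j)) / 2 ^ (n + j)) = (\<lambda>n. real (seq_shift j w n) / 2 ^ n / 2 ^ j)"
  by (auto simp: seq_shift_def power_add add.commute)

lemma summable_binary_seq_shift:
  assumes "summable (\<lambda>n. real (w n) / 2 ^ n)"
  shows "summable (\<lambda>n. real (seq_shift j w n) / 2 ^ n)"
proof -
  have "summable (\<lambda>n. real (seq_shift j w n) / 2 ^ n / 2 ^ j)"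
    using summable_ignore_initial_segment[OF assms, of j] by (simp only: binary_tail)
  then show ?thesis
    by (simp only: summable_divide_iff) simp
qed

lemma scaled_Shat_seq:
  assumes summable: "summable (\<lambda>n. real (w n) / 2 ^ n)"
  shows "2 ^ j * Shat_seq w = Shat_seq (seq_shift j w) + real (\<Sum>n<j. w n * 2 ^ (j - n))"
proof -
  have "(\<Sum>n. real (w (n + j)) / 2 ^ (n + j)) = Shat_seq (seq_shift j w) / 2 ^ j"
    unfolding binary_tail Shat_def by (rule suminf_divide[OF summable_binary_seq_shift[OF summable]])
  moreover have "2 ^ j * (\<Sum>n<j. real (w n) / 2 ^ n) = real (\<Sum>n<j. w n * 2 ^ (j - n))"
    unfolding of_nat_sum sum_distrib_left
  proof (intro sum.cong refl)
    fix n assume "n \<in> {..<j}"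
    then have "(2::real) ^ j = 2 ^ (j - n) * 2 ^ n"
      by (simp flip: power_add)
    then show "2 ^ j * (real (w n) / 2 ^ n) = real (w n * 2 ^ (j - n))"
      by simp
  qed
  ultimately show ?thesis
    unfolding Shat_def suminf_split_initial_segment[OF summable, of j]
    by (simp add: distrib_left)
qed

lemma D_Shat_seq_shift:
  assumes "summable (\<lambda>n. real (w n) / 2 ^ n)"
  shows "D j k (Shat_seq w) = D 0 k (Shat_seq (seq_shift j w))"
  unfolding D_eq_D_0_scaled[of j] scaled_Shat_seq[OF assms]
  by (rule D_0_add_of_nat[OF Shat_seq_nonneg[OF summable_binary_seq_shift[OF assms]]])

theorem lemma3p5:
  fixes M :: "'a measure" and \<zeta> :: "nat \<Rightarrow> 'a \<Rightarrow> nat" and k l :: nat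
  assumes "prob_space M"
    and indep: "prob_space.indep_vars M (\<lambda>_. count_space UNIV) \<zeta> UNIV"
    and ident: "\<And>n. distr M (count_space UNIV) (\<zeta> n) = distr M (count_space UNIV) (\<zeta> 0)"
    and pos: "\<And>i. measure M {\<omega> \<in> space M. \<zeta> 0 \<omega> = i} > 0"
    and conv: "AE \<omega> in M. summable (\<lambda>n. real (\<zeta> n \<omega>) / 2 ^ n)"
    and "k > 0" and "l < 2 ^ k"
  shows "AE \<omega> in M.
           (\<lambda>n. (\<Sum>j<n. if D j k (Shat \<zeta> \<omega>) = l then 1 else 0) / real n)
             \<longlonglongrightarrow> measure M {\<omega> \<in> space M. D 0 k (Shat \<zeta> \<omega>) = l}"
proof -
  interpret prob_space M by fact
  define \<Phi> where "\<Phi> w = (if D 0 k (Shat_seq w) = l then 1 else 0 :: real)" for w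
  have "\<Phi> \<in> borel_measurable (\<Pi>\<^sub>M i\<in>UNIV. count_space UNIV)"
    unfolding \<Phi>_def by measurable
  then have ergodic: "AE \<omega> in M. cesaro_mean (\<lambda>j. \<Phi> (seq_shift j (\<lambda>i. \<zeta> i \<omega>)))
                                    \<longlonglongrightarrow> expectation (\<lambda>\<omega>. \<Phi> (\<lambda>i. \<zeta> i \<omega>))"
    by (rule AE_cesaro_mean_iid_tendsto[OF indep ident _, where B = 1]) (simp add: \<Phi>_def)
  have "expectation (\<lambda>\<omega>. \<Phi> (\<lambda>i. \<zeta> i \<omega>))
        = expectation (indicator {\<omega> \<in> space M. D 0 k (Shat \<zeta> \<omega>) = l})"
    by (intro Bochner_Integration.integral_cong) (auto simp: \<Phi>_def Shat_eq_Shat_seq[of \<zeta>])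
  then have mean: "expectation (\<lambda>\<omega>. \<Phi> (\<lambda>i. \<zeta> i \<omega>))
                   = prob {\<omega> \<in> space M. D 0 k (Shat \<zeta> \<omega>) = l}"
    by (simp add: Int_absorb2)
  show ?thesis
    using ergodic conv
  proof eventually_elim
    case (elim \<omega>)
    have "D j k (Shat \<zeta> \<omega>) = D 0 k (Shat_seq (seq_shift j (\<lambda>i. \<zeta> i \<omega>)))" for j
      unfolding Shat_eq_Shat_seq[of \<zeta>] using elim(2) by (rule D_Shat_seq_shift)
    with elim(1)[unfolded mean] show ?case
      by (simp add: cesaro_mean_def[abs_def] \<Phi>_def)
  qed
qed

end
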